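(* Let $\delta\ge1$ be an integer and $h\ge0$. Under the AMC-$h$ policy, for every characteristic function $v\in V_\delta$ and every arrival order $\pi$, the coalition structure $C_g$ formed by greedy players satisfies $|S|\le\left\lceil\frac{\delta\cdot\mathsf{min}}{\mathsf{min}+h}\right\rceil$ for every $S\in C_g$.
   Context: Players: a finite set $N=\{a_1,\dots,a_n\}$. A characteristic function is $v:2^N\to\mathbb{R}_{\ge 0}$ with $v(\emptyset)=0$. There are fixed constants $0<\mathsf{min}\le\mathsf{max}$ and $v$ is monotone and bounded: $\mathsf{min}\le v(S)\le v(T)\le\mathsf{max}$ for all nonempty $S\subseteq T\subseteq N$. $V_\delta$ is the set of such $v$ with $\delta\cdot\mathsf{min}\le\mathsf{max}<(\delta+1)\cdot\mathsf{min}$. Online process: an arrival order is a permutation $\pi=(\pi_1,\dots,\pi_n)$ of $N$; player $\pi_t$ arrives at time $t$; $\pi_{\prec t}$ is the set of players arriving before time $t$ and $\pi^{-1}(i)$ the arrival time of $i$. For $S\subseteq N$, $\pi_{|S}$ denotes the players of $S$ in the relative order of $\pi$. Let $C^{t-1}$ be the coalition structure of players arrived before time $t$ ($C^0=\emptyset$). At time $t$, player $\pi_t$ either joins an existing coalition $S\in C^{t-1}$ or forms $\{\pi_t\}$ (choice $S=\emptyset$); decisions are never revised. AMC-$h$ policy: when player $i$ joins coalition $S$, let $\mathsf{MC}_i=v((\pi_{\prec\pi^{-1}(i)}\cap S)\cup\{i\})-v(\pi_{\prec\pi^{-1}(i)}\cap S)$. If $\mathsf{MC}_i\le h$, all of $\mathsf{MC}_i$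 is added to the share of the last player of $S$ who arrived before $i$; if $\mathsf{MC}_i>h$, that previous player additionally receives $h$ and $i$ receives $\mathsf{MC}_i-h$; if $i$ is the first player of her coalition, the "previous player" is $i$ herself. Shares already assigned are never reduced; $\varphi_i(S,\pi_{|S})$ is $i$'s accumulated share when the coalition is $S$. Greedy players: $\pi_t$ chooses $S\in C^{t-1}\cup\{\emptyset\}$ maximizing $\varphi_{\pi_t}(S\cup\{\pi_t\},\pi_{|S\cup\{\pi_t\}})$ (predetermined tie-breaking); $C_g$ is the final structure after all $n$ arrivals. *)

theory Defs
  imports Main "HOL.Real"
begin

definition in_V :: "'a set \<Rightarrow> real \<Rightarrow> real \<Rightarrow> nat \<Rightarrow> ('a set \<Rightarrow> real) \<Rightarrow> bool" where
  "in_V N mn mx \<delta> v \<longleftrightarrow>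
     0 < mn \<and> mn \<le> mx \<and>
     v {} = 0 \<and> (\<forall>S. S \<subseteq> N \<longrightarrow> 0 \<le> v S) \<and>
     (\<forall>S T. S \<noteq> {} \<longrightarrow> S \<subseteq> T \<longrightarrow> T \<subseteq> N \<longrightarrow> mn \<le> v S \<and> v S \<le> v T \<and> v T \<le> mx) \<and>
     real \<delta> * mn \<le> mx \<and> mx < (real \<delta> + 1) * mn"

text \<open>AMC-h shares of a coalition given as the list of its members in arrival order,
  here in REVERSED order (most recent arrival first).\<close>
fun amc_share_rev :: "('a set \<Rightarrow> real) \<Rightarrow> real \<Rightarrow> 'a list \<Rightarrow> 'a \<Rightarrow> real" where
  "amc_share_rev v h [] = (\<lambda>_. 0)"
| "amc_share_rev v h (i # ys) =
     (let \<phi> = amc_share_rev v h ys;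
          mc = v (insert i (set ys)) - v (set ys)
      in if ys = [] then \<phi>(i := \<phi> i + mc)
         else (let p = hd ys in
               if mc \<le> h then \<phi>(p := \<phi> p + mc)
               else \<phi>(p := \<phi> p + h, i := \<phi> i + (mc - h))))"

definition amc_share :: "('a set \<Rightarrow> real) \<Rightarrow> real \<Rightarrow> 'a list \<Rightarrow> 'a \<Rightarrow> real" where
  "amc_share v h xs = amc_share_rev v h (rev xs)"

text \<open>Coalition structures: lists of coalitions, each a list of members in arrival order.
  Options for an arriving player: None = form a new singleton coalition,
  Some j = join the j-th existing coalition.\<close>
definition option_value :: "('a set \<Rightarrow> real) \<Rightarrow> real \<Rightarrow> 'a list list \<Rightarrow> 'a \<Rightarrow> nat option \<Rightarrow> real" where
  "option_value v h C i c = (case c of None \<Rightarrow> amc_share v h [i] i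
                                     | Some j \<Rightarrow> amc_share v h (C ! j @ [i]) i)"

definition valid_option :: "'a list list \<Rightarrow> nat option \<Rightarrow> bool" where
  "valid_option C c = (case c of None \<Rightarrow> True | Some j \<Rightarrow> j < length C)"

definition apply_option :: "'a list list \<Rightarrow> 'a \<Rightarrow> nat option \<Rightarrow> 'a list list" where
  "apply_option C i c = (case c of None \<Rightarrow> C @ [[i]]
                                  | Some j \<Rightarrow> C[j := C ! j @ [i]])"

text \<open>A greedy step: the arriving player i picks a valid option maximizing her share.
  Allowing every maximizer covers every predetermined tie-breaking rule.\<close>
definition greedy_step :: "('a set \<Rightarrow> real) \<Rightarrow> real \<Rightarrow> 'a list list \<Rightarrow> 'a \<Rightarrow> 'a list list \<Rightarrow> bool" where
  "greedy_step v h C i C' \<longleftrightarrow>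
     (\<exists>c. valid_option C c \<and>
          (\<forall>c'. valid_option C c' \<longrightarrow> option_value v h C i c' \<le> option_value v h C i c) \<and>
          C' = apply_option C i c)"

inductive greedy_run :: "('a set \<Rightarrow> real) \<Rightarrow> real \<Rightarrow> 'a list \<Rightarrow> 'a list list \<Rightarrow> bool"
  for v h where
  Nil: "greedy_run v h [] []"
| snoc: "greedy_run v h ps C \<Longrightarrow> greedy_step v h C i C' \<Longrightarrow> greedy_run v h (ps @ [i]) C'"

end

theory Submission
  imports Defs
begin

text \<open>A greedy player joins an existing coalition only if her share there is at least the
  share \<open>v {i} \<ge> min\<close> she would get alone. Under AMC-\<open>h\<close> a joining player keeps only the part
  of her marginal contribution exceeding \<open>h\<close>, so every player after the first adds at least
  \<open>min + h\<close> to the value of her coalition. A coalition of \<open>k\<close> players is therefore worth at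
  least \<open>min + (k - 1) (min + h)\<close>, and comparing with \<open>max < (\<delta> + 1) min\<close> bounds \<open>k\<close>.\<close>

lemma amc_share_rev_notin: "i \<notin> set ys \<Longrightarrow> amc_share_rev v h ys i = 0"
proof (induction ys)
  case (Cons j ys)
  then show ?case by (cases ys) (auto simp: Let_def)
qed simp

lemma amc_share_singleton: "amc_share v h [i] i = v {i} - v {}"
  by (simp add: amc_share_def Let_def)

lemma amc_share_append_last:
  assumes "xs \<noteq> []" and "i \<notin> set xs"
  shows "amc_share v h (xs @ [i]) i =
    (let mc = v (insert i (set xs)) - v (set xs) in if mc \<le> h then 0 else mc - h)"
proof -
  have "hd (rev xs) \<in> set xs"
    using assms(1) by (metis hd_in_set rev_is_Nil_conv set_rev)
  then have "hd (rev xs) \<noteq> i" using assms(2) by blast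
  then show ?thesis
    using assms amc_share_rev_notin[of i "rev xs" v h]
    by (simp add: amc_share_def Let_def)
qed

lemma marginal_contribution_ge_of_amc_share_ge:
  assumes "xs \<noteq> []" and "i \<notin> set xs" and "0 < a" and "a \<le> amc_share v h (xs @ [i]) i"
  shows "a + h \<le> v (insert i (set xs)) - v (set xs)"
  using assms(3,4) amc_share_append_last[OF assms(1,2), of v h]
  by (simp add: Let_def split: if_splits)

lemma set_apply_option_None: "set (apply_option C i None) = insert [i] (set C)"
  by (simp add: apply_option_def)

lemma set_apply_option_Some: "set (apply_option C i (Some j)) \<subseteq> insert (C ! j @ [i]) (set C)"
  by (simp add: apply_option_def set_update_subset_insert)

lemma greedy_step_cases:
  assumes "greedy_step v h C i C'" and "T \<in> set C'"
  obtains "T \<in> set C"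
  | "T = [i]"
  | S where "S \<in> set C" and "T = S @ [i]" and "amc_share v h [i] i \<le> amc_share v h (S @ [i]) i"
proof -
  from assms(1) obtain c where valid: "valid_option C c"
    and best: "\<And>c'. valid_option C c' \<Longrightarrow> option_value v h C i c' \<le> option_value v h C i c"
    and C': "C' = apply_option C i c"
    unfolding greedy_step_def by blast
  show thesis
  proof (cases c)
    case None
    then have "T = [i] \<or> T \<in> set C"
      using assms(2) C' by (simp add: set_apply_option_None)
    then show thesis using that(1,2) by blast
  next
    case (Some j)
    then have "T \<in> set (apply_option C i (Some j))"
      using assms(2) C' by simp
    then have "T = C ! j @ [i] \<or> T \<in> set C"
      using set_apply_option_Some[of C i j] by blast
    moreover have "C ! j \<in> set C"
      using valid Some by (simp add: valid_option_def)
    moreover have "amc_share v h [i] i \<le> amc_share v h (C ! j @ [i]) i"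
      using best[of None] Some by (simp add: valid_option_def option_value_def)
    ultimately show thesis using that(1,3) by blast
  qed
qed

lemma greedy_run_coalition_value_ge:
  assumes "greedy_run v h ps C" and "distinct ps" and "0 < mn" and "v {} = 0"
    and "\<forall>i \<in> set ps. mn \<le> v {i}"
  shows "\<forall>S \<in> set C. S \<noteq> [] \<and> distinct S \<and> set S \<subseteq> set ps \<and>
           mn + (real (length S) - 1) * (mn + h) \<le> v (set S)"
  using assms
proof (induction rule: greedy_run.induct)
  case Nil
  then show ?case by simp
next
  case (snoc ps C i C')
  have IH: "\<forall>S \<in> set C. S \<noteq> [] \<and> distinct S \<and> set S \<subseteq> set ps \<and>
              mn + (real (length S) - 1) * (mn + h) \<le> v (set S)"
    using snoc by simp
  have i_new: "i \<notin> set ps" and v_i: "mn \<le> v {i}"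
    using snoc.prems by auto
  show ?case
  proof
    fix T assume "T \<in> set C'"
    with snoc.hyps(2) show "T \<noteq> [] \<and> distinct T \<and> set T \<subseteq> set (ps @ [i]) \<and>
        mn + (real (length T) - 1) * (mn + h) \<le> v (set T)"
    proof (cases rule: greedy_step_cases)
      case 1
      then show ?thesis using IH by auto
    next
      case 2
      then show ?thesis using v_i by simp
    next
      case (3 S)
      have S: "S \<noteq> []" "distinct S" "set S \<subseteq> set ps"
        "mn + (real (length S) - 1) * (mn + h) \<le> v (set S)"
        using IH \<open>S \<in> set C\<close> by auto
      have "i \<notin> set S" using S(3) i_new by auto
      have "mn \<le> amc_share v h (S @ [i]) i"
        using 3 v_i snoc.prems(3) by (simp add: amc_share_singleton)
      then have "mn + h \<le> v (insert i (set S)) - v (set S)"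
        using marginal_contribution_ge_of_amc_share_ge[OF S(1) \<open>i \<notin> set S\<close> \<open>0 < mn\<close>] by blast
      moreover have "(real (length (S @ [i])) - 1) * (mn + h) =
          (real (length S) - 1) * (mn + h) + (mn + h)"
        by (simp add: algebra_simps)
      ultimately have "mn + (real (length (S @ [i])) - 1) * (mn + h) \<le> v (set (S @ [i]))"
        using S(4) by simp
      then show ?thesis
        using 3 S \<open>i \<notin> set S\<close> by auto
    qed
  qed
qed

theorem lemma3:
  fixes N :: "'a set" and v :: "'a set \<Rightarrow> real" and mn mx h :: real and \<delta> :: nat
    and \<pi> :: "'a list" and Cg :: "'a list list"
  assumes "\<delta> \<ge> 1" and "h \<ge> 0"
    and "in_V N mn mx \<delta> v"
    and "distinct \<pi>" and "set \<pi> = N"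
    and "greedy_run v h \<pi> Cg"
  shows "\<forall>S \<in> set Cg. int (card (set S)) \<le> \<lceil>real \<delta> * mn / (mn + h)\<rceil>"
proof
  fix S assume "S \<in> set Cg"
  have V: "0 < mn" "v {} = 0" "\<forall>i \<in> N. mn \<le> v {i}" "mx < (real \<delta> + 1) * mn"
    and v_le_mx: "\<And>T. T \<noteq> {} \<Longrightarrow> T \<subseteq> N \<Longrightarrow> v T \<le> mx"
    using assms(3) unfolding in_V_def by auto
  have S: "S \<noteq> []" "distinct S" "set S \<subseteq> N"
    "mn + (real (length S) - 1) * (mn + h) \<le> v (set S)"
    using greedy_run_coalition_value_ge[OF assms(6,4) V(1,2)] V(3) assms(5) \<open>S \<in> set Cg\<close> by auto
  have "mn + (real (length S) - 1) * (mn + h) < mn + real \<delta> * mn"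
    using S(4) v_le_mx[of "set S"] S(1,3) V(4) by (simp add: distrib_right)
  then have "real (length S) - 1 < real \<delta> * mn / (mn + h)"
    using V(1) assms(2) by (simp add: pos_less_divide_eq)
  moreover have "card (set S) = length S"
    using S(2) by (rule distinct_card)
  ultimately show "int (card (set S)) \<le> \<lceil>real \<delta> * mn / (mn + h)\<rceil>"
    by (simp add: le_ceiling_iff)
qed

end
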